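(* If a mixed graph $G=(V,D,B)$ with $V=[m]$ has $|D|+|B|>\binom{m}{2}$ edges (where $|B|$ counts unordered bidirected edges), then $G$ is HTC-infinite-to-one: every family $(Y_v:v\in V)$ of subsets of $V$ either contains a set $Y_v$ not satisfying the half-trek criterion with respect to $v$, or contains a pair $Y_v,Y_w$ with $v\in Y_w$ and $w\in Y_v$.
   Context: A mixed graph is $G=(V,D,B)$ with $V=[m]$, $D\subseteq V\times V$ directed edges $v\to w$, $B$ a set of bidirected edges $v\leftrightarrow w$ (unordered), no self-loops. $\mathrm{pa}(v)=\{w:w\to v\in D\}$, $\mathrm{sib}(v)=\{w:w\leftrightarrow v\in B\}$. A half-trek from $v$ to $w$ is a path $v\leftrightarrow w_0\to w_1\to\cdots\to w_r=w$ (left side $\{v\}$, right side $\{w_0,\dots,w_r\}$) or $v\to w_1\to\cdots\to w_r=w$, $r\ge0$ (left side $\{v\}$, right side $\{v,w_1,\dots,w_r\}$); nodes may repeat. A system of half-treks from $X$ to $Y$ is a set of half-treks with distinct sources forming $X$ and distinct targets forming $Y$; no sided intersection means pairwise disjoint left sides and pairwise disjoint right sides. $Y$ satisfies the half-trek criterion w.r.t. $v$ if $|Y|=|\mathrm{pa}(v)|$, $Y\cap(\{v\}\cup\mathrm{sib}(v))=\emptyset$, and there is a system of half-treks with no sided intersection from $Y$ to $\mathrm{pa}(v)$. *)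

theory Defs
  imports Main
begin

text \<open>Mixed graph on vertex set V = {1..m}: D is a set of ordered pairs (v,w) meaning v -> w,
B is a set of unordered pairs {v,w} (two-element sets) meaning v <-> w.\<close>

definition mixed_graph :: "nat \<Rightarrow> (nat \<times> nat) set \<Rightarrow> nat set set \<Rightarrow> bool" where
  "mixed_graph m D B \<longleftrightarrow>
     D \<subseteq> {1..m} \<times> {1..m} \<and> (\<forall>v. (v, v) \<notin> D) \<and>
     (\<forall>e\<in>B. \<exists>v w. v \<in> {1..m} \<and> w \<in> {1..m} \<and> v \<noteq> w \<and> e = {v, w})"

definition pa :: "(nat \<times> nat) set \<Rightarrow> nat \<Rightarrow> nat set" where
  "pa D v = {w. (w, v) \<in> D}"

definition sib :: "nat set set \<Rightarrow> nat \<Rightarrow> nat set" where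
  "sib B v = {w. {w, v} \<in> B}"

text \<open>A directed walk: consecutive nodes are joined by directed edges (nodes may repeat).\<close>
definition dpath :: "(nat \<times> nat) set \<Rightarrow> nat list \<Rightarrow> bool" where
  "dpath D ps \<longleftrightarrow> ps \<noteq> [] \<and> (\<forall>i. Suc i < length ps \<longrightarrow> (ps ! i, ps ! Suc i) \<in> D)"

text \<open>A half-trek is encoded as (bi, ps): if bi, then ps = v # w0 # ... # wr with v <-> w0 and
w0 -> ... -> wr; otherwise ps = v # w1 # ... # wr with v -> w1 -> ... -> wr (r >= 0).\<close>
type_synonym halftrek = "bool \<times> nat list"

definition is_halftrek :: "(nat \<times> nat) set \<Rightarrow> nat set set \<Rightarrow> halftrek \<Rightarrow> bool" where
  "is_halftrek D B h \<longleftrightarrow>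
     (if fst h then length (snd h) \<ge> 2 \<and> {hd (snd h), hd (tl (snd h))} \<in> B \<and> dpath D (tl (snd h))
      else dpath D (snd h))"

definition ht_source :: "halftrek \<Rightarrow> nat" where
  "ht_source h = hd (snd h)"

definition ht_target :: "halftrek \<Rightarrow> nat" where
  "ht_target h = last (snd h)"

definition ht_left :: "halftrek \<Rightarrow> nat set" where
  "ht_left h = {ht_source h}"

definition ht_right :: "halftrek \<Rightarrow> nat set" where
  "ht_right h = (if fst h then set (tl (snd h)) else set (snd h))"

definition ht_system_nsi ::
  "(nat \<times> nat) set \<Rightarrow> nat set set \<Rightarrow> halftrek set \<Rightarrow> nat set \<Rightarrow> nat set \<Rightarrow> bool" where
  "ht_system_nsi D B H X Y \<longleftrightarrow>
     finite H \<and> (\<forall>h\<in>H. is_halftrek D B h) \<and>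
     inj_on ht_source H \<and> ht_source ` H = X \<and>
     inj_on ht_target H \<and> ht_target ` H = Y \<and>
     (\<forall>h1\<in>H. \<forall>h2\<in>H. h1 \<noteq> h2 \<longrightarrow> ht_left h1 \<inter> ht_left h2 = {}) \<and>
     (\<forall>h1\<in>H. \<forall>h2\<in>H. h1 \<noteq> h2 \<longrightarrow> ht_right h1 \<inter> ht_right h2 = {})"

definition htc :: "(nat \<times> nat) set \<Rightarrow> nat set set \<Rightarrow> nat set \<Rightarrow> nat \<Rightarrow> bool" where
  "htc D B Y v \<longleftrightarrow>
     card Y = card (pa D v) \<and> Y \<inter> ({v} \<union> sib B v) = {} \<and>
     (\<exists>H. ht_system_nsi D B H Y (pa D v))"

definition htc_infinite_to_one :: "nat \<Rightarrow> (nat \<times> nat) set \<Rightarrow> nat set set \<Rightarrow> bool" where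
  "htc_infinite_to_one m D B \<longleftrightarrow>
     (\<forall>Y :: nat \<Rightarrow> nat set. (\<forall>v\<in>{1..m}. Y v \<subseteq> {1..m}) \<longrightarrow>
        (\<exists>v\<in>{1..m}. \<not> htc D B (Y v) v) \<or>
        (\<exists>v\<in>{1..m}. \<exists>w\<in>{1..m}. v \<noteq> w \<and> v \<in> Y w \<and> w \<in> Y v))"

end

theory Submission
  imports Defs
begin

text \<open>
  The theorem is a pure counting argument.
  Suppose a family (Y v) witnesses that G is not HTC-infinite-to-one.  The half-trek criterion
  gives |Y v| = |pa v| and Y v avoids v and its siblings, and no two vertices lie in each
  other's sets.  Hence the pairs (v, w) with w in Y v are mapped injectively by
  (v, w) \<mapsto> {v, w} onto two-element subsets of V that are not bidirected edges.
  Together with the bidirected edges these are |D| + |B| distinct two-element subsets of V,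
  contradicting |D| + |B| > m choose 2.
  The file first counts directed edges via parent sets, then proves the counting bound for an
  arbitrary "asymmetric" set family together with a disjoint set of doubletons, then extracts
  the relevant consequences of the half-trek criterion, and finally combines them.
\<close>

text \<open>Every directed edge is counted exactly once, at its head.\<close>

lemma card_edges_eq_sum_pa:
  assumes "finite A" and "D \<subseteq> A \<times> A"
  shows "card D = (\<Sum>v\<in>A. card (pa D v))"
proof -
  have pa_sub: "pa D v \<subseteq> A" for v
    using assms(2) unfolding pa_def by auto
  have "converse D = (SIGMA v:A. pa D v)"
    using assms(2) unfolding pa_def by auto
  then have "card D = card (SIGMA v:A. pa D v)"
    by (metis card_inverse)
  also have "\<dots> = (\<Sum>v\<in>A. card (pa D v))"
    using assms(1) pa_sub by (intro card_SigmaI) (auto intro: finite_subset)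
  finally show ?thesis .
qed

definition doubletons :: "'a set \<Rightarrow> 'a set set" where
  "doubletons A = {e. e \<subseteq> A \<and> card e = 2}"

lemma card_doubletons: "finite A \<Longrightarrow> card (doubletons A) = card A choose 2"
  unfolding doubletons_def by (rule n_subsets)

lemma finite_doubletons: "finite A \<Longrightarrow> finite (doubletons A)"
  unfolding doubletons_def by (rule finite_subset[of _ "Pow A"]) auto

lemma doubleton_in_doubletons: "v \<in> A \<Longrightarrow> w \<in> A \<Longrightarrow> v \<noteq> w \<Longrightarrow> {v, w} \<in> doubletons A"
  unfolding doubletons_def by auto

lemma doubleton_inj_on_Sigma:
  assumes asym: "\<And>v w. v \<in> A \<Longrightarrow> w \<in> A \<Longrightarrow> v \<noteq> w \<Longrightarrow> v \<in> Y w \<Longrightarrow> w \<notin> Y v"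
  shows "inj_on (\<lambda>(v, w). {v, w}) (SIGMA v:A. Y v)"
proof (rule inj_onI, clarsimp)
  fix a b c d
  assume "a \<in> A" "b \<in> Y a" "c \<in> A" "d \<in> Y c" and eq: "{a, b} = {c, d}"
  from eq have "(a = c \<and> b = d) \<or> (a = d \<and> b = c)"
    by (metis doubleton_eq_iff)
  moreover have "\<not> (a = d \<and> b = c \<and> a \<noteq> c)"
    using asym[of c a] \<open>a \<in> A\<close> \<open>b \<in> Y a\<close> \<open>c \<in> A\<close> \<open>d \<in> Y c\<close> by blast
  ultimately show "a = c \<and> b = d"
    by blast
qed

lemma asymmetric_family_count:
  assumes "finite A"
    and sub: "\<And>v. v \<in> A \<Longrightarrow> Y v \<subseteq> A - {v}"
    and asym: "\<And>v w. v \<in> A \<Longrightarrow> w \<in> A \<Longrightarrow> v \<noteq> w \<Longrightarrow> v \<in> Y w \<Longrightarrow> w \<notin> Y v"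
    and B: "B \<subseteq> doubletons A"
    and avoid: "\<And>v w. v \<in> A \<Longrightarrow> w \<in> Y v \<Longrightarrow> {v, w} \<notin> B"
  shows "(\<Sum>v\<in>A. card (Y v)) + card B \<le> card A choose 2"
proof -
  define f :: "'a \<times> 'a \<Rightarrow> 'a set" where "f = (\<lambda>(v, w). {v, w})"
  define P where "P = (SIGMA v:A. Y v)"
  have finY: "\<And>v. v \<in> A \<Longrightarrow> finite (Y v)"
    using sub \<open>finite A\<close> by (meson Diff_subset finite_subset)
  have "card (f ` P) = card P"
    unfolding f_def P_def using doubleton_inj_on_Sigma[OF asym] by (rule card_image)
  also have "\<dots> = (\<Sum>v\<in>A. card (Y v))"
    unfolding P_def using \<open>finite A\<close> finY by simp
  finally have card_fP: "card (f ` P) = (\<Sum>v\<in>A. card (Y v))" .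
  have fP: "f ` P \<subseteq> doubletons A"
    using sub by (force simp: f_def P_def intro: doubleton_in_doubletons)
  have disj: "f ` P \<inter> B = {}"
    using avoid by (auto simp: f_def P_def)
  have fin: "finite (doubletons A)"
    using \<open>finite A\<close> by (rule finite_doubletons)
  have "card (f ` P) + card B = card (f ` P \<union> B)"
    using fP B disj fin by (intro card_Un_disjoint [symmetric]) (auto intro: finite_subset)
  also have "\<dots> \<le> card (doubletons A)"
    using fP B fin by (intro card_mono) auto
  finally show ?thesis
    using card_fP card_doubletons[OF \<open>finite A\<close>] by simp
qed

lemma htc_card: "htc D B Y v \<Longrightarrow> card Y = card (pa D v)"
  unfolding htc_def by blast

lemma htc_not_self: "htc D B Y v \<Longrightarrow> v \<notin> Y"
  unfolding htc_def by blast

lemma htc_no_sibling: "htc D B Y v \<Longrightarrow> w \<in> Y \<Longrightarrow> {v, w} \<notin> B"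
  unfolding htc_def sib_def by (auto simp: insert_commute)

lemma mixed_graph_bidirected: "mixed_graph m D B \<Longrightarrow> B \<subseteq> doubletons {1..m}"
  unfolding mixed_graph_def by (metis doubleton_in_doubletons subsetI)

lemma mixed_graph_directed: "mixed_graph m D B \<Longrightarrow> D \<subseteq> {1..m} \<times> {1..m}"
  unfolding mixed_graph_def by blast

theorem mainTheorem4:
  fixes m :: nat and D :: "(nat \<times> nat) set" and B :: "nat set set"
  assumes "mixed_graph m D B"
    and "card D + card B > m choose 2"
  shows "htc_infinite_to_one m D B"
  unfolding htc_infinite_to_one_def
proof (intro allI impI, rule ccontr)
  fix Y :: "nat \<Rightarrow> nat set"
  assume Ysub: "\<forall>v\<in>{1..m}. Y v \<subseteq> {1..m}"
    and "\<not> ((\<exists>v\<in>{1..m}. \<not> htc D B (Y v) v) \<or>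
        (\<exists>v\<in>{1..m}. \<exists>w\<in>{1..m}. v \<noteq> w \<and> v \<in> Y w \<and> w \<in> Y v))"
  then have htc: "\<And>v. v \<in> {1..m} \<Longrightarrow> htc D B (Y v) v"
    and asym: "\<And>v w. v \<in> {1..m} \<Longrightarrow> w \<in> {1..m} \<Longrightarrow> v \<noteq> w \<Longrightarrow> v \<in> Y w \<Longrightarrow> w \<notin> Y v"
    by blast+
  have "card D = (\<Sum>v\<in>{1..m}. card (Y v))"
    using card_edges_eq_sum_pa[OF _ mixed_graph_directed[OF assms(1)]] htc_card[OF htc] by simp
  moreover have "(\<Sum>v\<in>{1..m}. card (Y v)) + card B \<le> card {1..m} choose 2"
    using Ysub htc_not_self[OF htc] asym mixed_graph_bidirected[OF assms(1)] htc_no_sibling[OF htc]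
    by (intro asymmetric_family_count) auto
  ultimately show False
    using assms(2) by simp
qed

end
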